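(* Let $n \geq 5$ and fix $\tau \in [0, \cos(2\pi/5))$ with $\tau \notin \{\cos(2\pi(i-1)/n) : i = 1,\dots,n\}$. Let $X \in (\mathbb{S}^1)^n$ be the regular $n$-gon, $x_i = (\cos\theta_i, \sin\theta_i)$ with $\theta_i = 2\pi(i-1)/n$. There exists $\varepsilon_{n,\tau} > 0$ such that for all $\varepsilon \in (0, \varepsilon_{n,\tau}]$, $X$ is a critical point of $f(X) = \frac12 \sum_{i,j=1}^n \varphi_{\varepsilon,\tau}(x_i^\top x_j)$ (all weights equal to 1), and the Riemannian Hessian of $f$ at $X$ has one zero eigenvalue and its other $n-1$ eigenvalues are negative.
   Context: $(\mathbb{S}^1)^n$ is the set of $X\in\mathbb{R}^{2\times n}$ with unit-norm columns, a Riemannian submanifold with the Frobenius metric. $\varphi_{\varepsilon,\tau}(t) = \varepsilon\log(1 + e^{(t-\tau)/\varepsilon})$ for $\varepsilon>0$. *)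

theory Defs
  imports "HOL-Analysis.Analysis"
begin

text \<open>A point of R^(2 x n) is represented as a function from column indices to R^2;
  only the columns 0..n-1 are meaningful (column k corresponds to the paper's x_(k+1)).\<close>
type_synonym cmat = "nat \<Rightarrow> real^2"

definition phi :: "real \<Rightarrow> real \<Rightarrow> real \<Rightarrow> real" where
  "phi eps tau t = eps * ln (1 + exp ((t - tau) / eps))"

definition fcost :: "nat \<Rightarrow> real \<Rightarrow> real \<Rightarrow> cmat \<Rightarrow> real" where
  "fcost n eps tau X = (1/2) * (\<Sum>i<n. \<Sum>j<n. phi eps tau (X i \<bullet> X j))"

definition frob :: "nat \<Rightarrow> cmat \<Rightarrow> cmat \<Rightarrow> real" where
  "frob n V W = (\<Sum>i<n. V i \<bullet> W i)"

definition on_torus :: "nat \<Rightarrow> cmat \<Rightarrow> bool" where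
  "on_torus n X \<longleftrightarrow> (\<forall>i<n. norm (X i) = 1)"

definition tangent :: "nat \<Rightarrow> cmat \<Rightarrow> cmat \<Rightarrow> bool" where
  "tangent n X V \<longleftrightarrow> (\<forall>i<n. X i \<bullet> V i = 0) \<and> (\<forall>i\<ge>n. V i = 0)"

definition proj :: "nat \<Rightarrow> cmat \<Rightarrow> cmat \<Rightarrow> cmat" where
  "proj n X Z = (\<lambda>i. if i < n then Z i - (X i \<bullet> Z i) *\<^sub>R X i else 0)"

definition egrad :: "nat \<Rightarrow> (cmat \<Rightarrow> real) \<Rightarrow> cmat \<Rightarrow> cmat" where
  "egrad n F X = (\<lambda>i. if i < n then
       (\<chi> k. deriv (\<lambda>t. F (X(i := X i + t *\<^sub>R axis k 1))) 0) else 0)"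

text \<open>Riemannian gradient for the Riemannian submanifold (S^1)^n of R^(2 x n)
  (Frobenius metric): projection of the Euclidean gradient. The same formula gives a smooth
  extension of the gradient field to all of R^(2 x n).\<close>
definition rgrad :: "nat \<Rightarrow> (cmat \<Rightarrow> real) \<Rightarrow> cmat \<Rightarrow> cmat" where
  "rgrad n F X = proj n X (egrad n F X)"

text \<open>Riemannian Hessian of a Riemannian submanifold: Hess f(X)[V] = Proj_X (D gbar(X)[V]),
  where gbar is the smooth extension of the Riemannian gradient field.\<close>
definition rhess :: "nat \<Rightarrow> (cmat \<Rightarrow> real) \<Rightarrow> cmat \<Rightarrow> cmat \<Rightarrow> cmat" where
  "rhess n F X V = proj n X
     (\<lambda>i. vector_derivative (\<lambda>t. rgrad n F (\<lambda>j. X j + t *\<^sub>R V j) i) (at 0))"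

definition critical_point :: "nat \<Rightarrow> (cmat \<Rightarrow> real) \<Rightarrow> cmat \<Rightarrow> bool" where
  "critical_point n F X \<longleftrightarrow> on_torus n X \<and> (\<forall>i<n. rgrad n F X i = 0)"

text \<open>The eigenvalues (with multiplicity) of the self-adjoint operator Hess f(X) on the
  n-dimensional tangent space T_X are lam 0, ..., lam (n-1): there is an orthonormal basis
  w 0, ..., w (n-1) of T_X (n orthonormal tangent vectors) of eigenvectors.\<close>
definition hess_eigenvalues :: "nat \<Rightarrow> (cmat \<Rightarrow> real) \<Rightarrow> cmat \<Rightarrow> (nat \<Rightarrow> real) \<Rightarrow> bool" where
  "hess_eigenvalues n F X lam \<longleftrightarrow>
     (\<exists>w :: nat \<Rightarrow> cmat.
        (\<forall>k<n. tangent n X (w k)) \<and>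
        (\<forall>k<n. \<forall>l<n. frob n (w k) (w l) = (if k = l then 1 else 0)) \<and>
        (\<forall>k<n. \<forall>i<n. rhess n F X (w k) i = lam k *\<^sub>R w k i))"

definition regular_ngon :: "nat \<Rightarrow> cmat" where
  "regular_ngon n = (\<lambda>k. vector [cos (2 * pi * real k / real n), sin (2 * pi * real k / real n)])"

end

theory Submission
  imports Defs "HOL-Real_Asymp.Real_Asymp"
begin

text \<open>At the regular polygon the Euclidean gradient of column \<open>i\<close> is
  \<open>\<Sum>\<^sub>l \<phi>'(cos(\<theta>\<^sub>l - \<theta>\<^sub>i)) x\<^sub>l\<close>, whose tangential part is a sum of an odd \<open>2\<pi>\<close>-periodic
  function over the \<open>n\<close>-th roots of unity and therefore vanishes. Writing tangent vectors as
  \<open>V\<^sub>l = a\<^sub>l x\<^sub>l\<^sup>\<bottom>\<close>, the Riemannian Hessian acts on the coefficients \<open>a\<close> as the symmetric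
  circulant \<open>a\<^sub>i \<mapsto> \<Sum>\<^sub>l (a\<^sub>i - a\<^sub>l) w(\<theta>\<^sub>l - \<theta>\<^sub>i)\<close> with the even weight
  \<open>w(d) = \<phi>''(cos d) sin\<^sup>2 d - \<phi>'(cos d) cos d\<close>. The Hartley vectors \<open>cas(k\<theta>\<^sub>l)/\<surd>n\<close>
  (\<open>cas = cos + sin\<close>) form a real orthonormal eigenbasis of every such circulant, with eigenvalues
  \<open>\<mu>\<^sub>k = \<Sum>\<^sub>m w(\<theta>\<^sub>m) (1 - cos(k\<theta>\<^sub>m))\<close>; in particular \<open>\<mu>\<^sub>0 = 0\<close>.
  As \<open>\<epsilon> \<rightarrow> 0\<close>, \<open>\<phi>'\<close> tends to the indicator of \<open>(\<tau>, \<infinity>)\<close> and \<open>\<phi>''\<close> to \<open>0\<close> away from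
  \<open>\<tau>\<close>, so \<open>w(\<theta>\<^sub>m) \<rightarrow> -cos \<theta>\<^sub>m [cos \<theta>\<^sub>m > \<tau>] \<le> 0\<close> because \<open>\<tau> \<ge> 0\<close>. The neighbour
  \<open>m = 1\<close> contributes strictly, since \<open>\<tau> < cos(2\<pi>/5) \<le> cos(2\<pi>/n)\<close>, so every \<open>\<mu>\<^sub>k\<close>
  with \<open>0 < k < n\<close> is eventually negative.\<close>

section \<open>Derivatives of the cost\<close>

definition phi' :: "real \<Rightarrow> real \<Rightarrow> real \<Rightarrow> real" where
  "phi' eps tau t = exp ((t - tau) / eps) / (1 + exp ((t - tau) / eps))"

definition phi'' :: "real \<Rightarrow> real \<Rightarrow> real \<Rightarrow> real" where
  "phi'' eps tau t = exp ((t - tau) / eps) / (eps * (1 + exp ((t - tau) / eps))\<^sup>2)"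

lemma phi_has_real_derivative:
  assumes "eps > 0"
  shows "(phi eps tau has_real_derivative phi' eps tau t) (at t)"
proof -
  have "0 < 1 + exp ((t - tau) / eps)" by (simp add: add_pos_pos)
  then show ?thesis
    unfolding phi_def[abs_def] phi'_def using assms
    by (auto intro!: derivative_eq_intros simp: divide_simps)
qed

lemma phi'_has_real_derivative:
  assumes "eps > 0"
  shows "(phi' eps tau has_real_derivative phi'' eps tau t) (at t)"
proof -
  have "0 < 1 + exp ((t - tau) / eps)" by (simp add: add_pos_pos)
  then show ?thesis
    unfolding phi'_def[abs_def] phi''_def using assms
    by (auto intro!: derivative_eq_intros simp: field_simps power2_eq_square)
qed

lemma inner_line_has_real_derivative:
  "((\<lambda>t. (a + t *\<^sub>R b) \<bullet> (c + t *\<^sub>R d)) has_real_derivative b \<bullet> c + a \<bullet> d) (at 0)"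
  for a b c d :: "'a::real_inner"
  unfolding has_field_derivative_def
  by (auto intro!: derivative_eq_intros simp: algebra_simps fun_eq_iff)

lemma fcost_line_has_real_derivative:
  assumes "eps > 0"
  shows "((\<lambda>t. fcost n eps tau (\<lambda>j. X j + t *\<^sub>R E j)) has_real_derivative
           (\<Sum>i<n. \<Sum>l<n. phi' eps tau (X i \<bullet> X l) * (E i \<bullet> X l))) (at 0)"
proof -
  have "((\<lambda>t. phi eps tau ((X i + t *\<^sub>R E i) \<bullet> (X l + t *\<^sub>R E l))) has_real_derivative
      phi' eps tau (X i \<bullet> X l) * (E i \<bullet> X l + X i \<bullet> E l)) (at 0)" for i l
    using DERIV_chain2[OF phi_has_real_derivative[OF assms] inner_line_has_real_derivative] by simp
  then have "((\<lambda>t. fcost n eps tau (\<lambda>j. X j + t *\<^sub>R E j)) has_real_derivative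
      (1/2) * (\<Sum>i<n. \<Sum>l<n. phi' eps tau (X i \<bullet> X l) * (E i \<bullet> X l + X i \<bullet> E l))) (at 0)"
    unfolding fcost_def by (intro DERIV_cmult DERIV_sum)
  moreover have "(\<Sum>i<n. \<Sum>l<n. phi' eps tau (X i \<bullet> X l) * (X i \<bullet> E l))
      = (\<Sum>i<n. \<Sum>l<n. phi' eps tau (X i \<bullet> X l) * (E i \<bullet> X l))"
    by (subst sum.swap) (simp add: inner_commute)
  ultimately show ?thesis by (simp add: distrib_left sum.distrib)
qed

definition fcost_egrad :: "nat \<Rightarrow> real \<Rightarrow> real \<Rightarrow> cmat \<Rightarrow> nat \<Rightarrow> real^2" where
  "fcost_egrad n eps tau X i = (\<Sum>l<n. phi' eps tau (X i \<bullet> X l) *\<^sub>R X l)"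

lemma egrad_fcost:
  assumes "eps > 0" and "i < n"
  shows "egrad n (fcost n eps tau) X i = fcost_egrad n eps tau X i"
proof -
  have "deriv (\<lambda>t. fcost n eps tau (X(i := X i + t *\<^sub>R axis k 1))) 0 = fcost_egrad n eps tau X i $ k"
    for k
  proof -
    let ?E = "\<lambda>j. if j = i then axis k 1 else 0"
    have "(\<lambda>t. X(i := X i + t *\<^sub>R axis k 1)) = (\<lambda>t j. X j + t *\<^sub>R ?E j)"
      by (auto simp: fun_eq_iff)
    then have "deriv (\<lambda>t. fcost n eps tau (X(i := X i + t *\<^sub>R axis k 1))) 0
        = (\<Sum>j<n. \<Sum>l<n. phi' eps tau (X j \<bullet> X l) * (?E j \<bullet> X l))"
      using DERIV_imp_deriv[OF fcost_line_has_real_derivative[OF assms(1)]] by metis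
    also have "\<dots> = (\<Sum>l<n. phi' eps tau (X i \<bullet> X l) * (axis k 1 \<bullet> X l))"
      using assms(2)
      by (simp add: if_distrib if_distribR cong: if_cong) (subst sum.swap, simp add: sum.delta)
    finally show ?thesis by (simp add: fcost_egrad_def inner_axis')
  qed
  then show ?thesis using assms(2) by (simp add: egrad_def vec_eq_iff)
qed

lemma rgrad_fcost:
  assumes "eps > 0" and "i < n"
  shows "rgrad n (fcost n eps tau) X i
           = fcost_egrad n eps tau X i - (X i \<bullet> fcost_egrad n eps tau X i) *\<^sub>R X i"
  using egrad_fcost[OF assms] assms(2) by (simp add: rgrad_def proj_def)

definition fcost_egrad_deriv :: "nat \<Rightarrow> real \<Rightarrow> real \<Rightarrow> cmat \<Rightarrow> cmat \<Rightarrow> nat \<Rightarrow> real^2" where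
  "fcost_egrad_deriv n eps tau X V i = (\<Sum>l<n. phi' eps tau (X i \<bullet> X l) *\<^sub>R V l
       + (phi'' eps tau (X i \<bullet> X l) * (V i \<bullet> X l + X i \<bullet> V l)) *\<^sub>R X l)"

lemma fcost_egrad_line_has_vector_derivative:
  assumes "eps > 0"
  shows "((\<lambda>t. fcost_egrad n eps tau (\<lambda>j. X j + t *\<^sub>R V j) i) has_vector_derivative
           fcost_egrad_deriv n eps tau X V i) (at 0)"
  unfolding fcost_egrad_def fcost_egrad_deriv_def
proof (rule has_vector_derivative_sum)
  fix l
  have "((\<lambda>t. phi' eps tau ((X i + t *\<^sub>R V i) \<bullet> (X l + t *\<^sub>R V l))) has_real_derivative
      phi'' eps tau (X i \<bullet> X l) * (V i \<bullet> X l + X i \<bullet> V l)) (at 0)"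
    using DERIV_chain2[OF phi'_has_real_derivative[OF assms] inner_line_has_real_derivative] by simp
  then show "((\<lambda>t. phi' eps tau ((X i + t *\<^sub>R V i) \<bullet> (X l + t *\<^sub>R V l)) *\<^sub>R (X l + t *\<^sub>R V l))
      has_vector_derivative phi' eps tau (X i \<bullet> X l) *\<^sub>R V l
        + (phi'' eps tau (X i \<bullet> X l) * (V i \<bullet> X l + X i \<bullet> V l)) *\<^sub>R X l) (at 0)"
    by (auto intro!: derivative_eq_intros)
qed

lemma normal_component_line_has_vector_derivative:
  fixes x v :: "'a::real_inner"
  assumes "(G has_vector_derivative G') (at 0)"
  shows "((\<lambda>t. G t - ((x + t *\<^sub>R v) \<bullet> G t) *\<^sub>R (x + t *\<^sub>R v)) has_vector_derivative
           G' - (v \<bullet> G 0 + x \<bullet> G') *\<^sub>R x - (x \<bullet> G 0) *\<^sub>R v) (at 0)"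
  using assms unfolding has_vector_derivative_def
  by (auto intro!: derivative_eq_intros simp: algebra_simps fun_eq_iff)

lemma rhess_fcost:
  assumes "eps > 0" and "i < n"
  shows "rhess n (fcost n eps tau) X V i =
    (let G = fcost_egrad n eps tau X i; G' = fcost_egrad_deriv n eps tau X V i;
         D = G' - (V i \<bullet> G + X i \<bullet> G') *\<^sub>R X i - (X i \<bullet> G) *\<^sub>R V i
     in D - (X i \<bullet> D) *\<^sub>R X i)"
proof -
  have "(\<lambda>t. rgrad n (fcost n eps tau) (\<lambda>j. X j + t *\<^sub>R V j) i) =
      (\<lambda>t. fcost_egrad n eps tau (\<lambda>j. X j + t *\<^sub>R V j) i
         - ((X i + t *\<^sub>R V i) \<bullet> fcost_egrad n eps tau (\<lambda>j. X j + t *\<^sub>R V j) i) *\<^sub>R (X i + t *\<^sub>R V i))"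
    using rgrad_fcost[OF assms] by simp
  with normal_component_line_has_vector_derivative[OF fcost_egrad_line_has_vector_derivative[OF assms(1)]]
  have "vector_derivative (\<lambda>t. rgrad n (fcost n eps tau) (\<lambda>j. X j + t *\<^sub>R V j) i) (at 0)
      = fcost_egrad_deriv n eps tau X V i
        - (V i \<bullet> fcost_egrad n eps tau X i + X i \<bullet> fcost_egrad_deriv n eps tau X V i) *\<^sub>R X i
        - (X i \<bullet> fcost_egrad n eps tau X i) *\<^sub>R V i"
    by (simp add: vector_derivative_at)
  then show ?thesis using assms(2) by (simp add: rhess_def proj_def Let_def)
qed

section \<open>The Hessian at the regular polygon\<close>

definition ngon_angle :: "nat \<Rightarrow> nat \<Rightarrow> real" where
  "ngon_angle n l = 2 * pi * real l / real n"

definition ngon_tangent :: "nat \<Rightarrow> nat \<Rightarrow> real^2" where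
  "ngon_tangent n l = vector [- sin (ngon_angle n l), cos (ngon_angle n l)]"

lemma regular_ngon_eq: "regular_ngon n l = vector [cos (ngon_angle n l), sin (ngon_angle n l)]"
  by (simp add: regular_ngon_def ngon_angle_def)

lemma inner_vector_2: "(vector [a, b] :: real^2) \<bullet> vector [c, d] = a * c + b * d"
  by (simp add: inner_vec_def sum_2)

lemma regular_ngon_inner:
  "regular_ngon n i \<bullet> regular_ngon n l = cos (ngon_angle n l - ngon_angle n i)"
  by (simp add: regular_ngon_eq inner_vector_2 cos_diff algebra_simps)

lemma ngon_tangent_inner_regular_ngon:
  "ngon_tangent n i \<bullet> regular_ngon n l = sin (ngon_angle n l - ngon_angle n i)"
  by (simp add: regular_ngon_eq ngon_tangent_def inner_vector_2 sin_diff algebra_simps)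

lemma regular_ngon_inner_ngon_tangent:
  "regular_ngon n i \<bullet> ngon_tangent n l = - sin (ngon_angle n l - ngon_angle n i)"
  by (simp add: regular_ngon_eq ngon_tangent_def inner_vector_2 sin_diff algebra_simps)

lemma ngon_tangent_inner:
  "ngon_tangent n i \<bullet> ngon_tangent n l = cos (ngon_angle n l - ngon_angle n i)"
  by (simp add: ngon_tangent_def inner_vector_2 cos_diff algebra_simps)

lemma vector_2_orthonormal_decomposition:
  fixes v :: "real^2"
  assumes "c\<^sup>2 + s\<^sup>2 = 1"
  shows "v = (vector [c, s] \<bullet> v) *\<^sub>R vector [c, s] + (vector [- s, c] \<bullet> v) *\<^sub>R vector [- s, c]"
proof -
  have "v $ k = v $ k * (c\<^sup>2 + s\<^sup>2)" for k using assms by simp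
  then show ?thesis
    by (simp add: vec_eq_iff forall_2 inner_vec_def sum_2 algebra_simps power2_eq_square)
qed

lemma regular_ngon_normal_part:
  "D - (regular_ngon n i \<bullet> D) *\<^sub>R regular_ngon n i = (ngon_tangent n i \<bullet> D) *\<^sub>R ngon_tangent n i"
  using vector_2_orthonormal_decomposition[of "cos (ngon_angle n i)" "sin (ngon_angle n i)" D]
  by (simp add: regular_ngon_eq ngon_tangent_def algebra_simps)

definition hess_weight :: "real \<Rightarrow> real \<Rightarrow> real \<Rightarrow> real" where
  "hess_weight eps tau d = phi'' eps tau (cos d) * (sin d)\<^sup>2 - phi' eps tau (cos d) * cos d"

lemma rhess_fcost_regular_ngon:
  assumes "eps > 0" and "i < n"
  shows "rhess n (fcost n eps tau) (regular_ngon n) (\<lambda>l. (if l < n then a l else 0) *\<^sub>R ngon_tangent n l) i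
     = (\<Sum>l<n. (a i - a l) * hess_weight eps tau (ngon_angle n l - ngon_angle n i)) *\<^sub>R ngon_tangent n i"
proof -
  let ?X = "regular_ngon n" and ?V = "\<lambda>l. (if l < n then a l else 0) *\<^sub>R ngon_tangent n l"
  let ?d = "\<lambda>l. ngon_angle n l - ngon_angle n i"
  have tangent_G': "ngon_tangent n i \<bullet> fcost_egrad_deriv n eps tau ?X ?V i
      = (\<Sum>l<n. phi' eps tau (cos (?d l)) * (a l * cos (?d l))
               + phi'' eps tau (cos (?d l)) * (a i - a l) * (sin (?d l))\<^sup>2)"
    unfolding fcost_egrad_deriv_def inner_sum_right using assms(2)
    by (intro sum.cong) (simp_all add: inner_add_right inner_add_left regular_ngon_inner
        ngon_tangent_inner_regular_ngon regular_ngon_inner_ngon_tangent ngon_tangent_inner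
        algebra_simps power2_eq_square)
  have normal_G: "?X i \<bullet> fcost_egrad n eps tau ?X i = (\<Sum>l<n. phi' eps tau (cos (?d l)) * cos (?d l))"
    by (simp add: fcost_egrad_def inner_sum_right regular_ngon_inner)
  have "rhess n (fcost n eps tau) ?X ?V i
      = (ngon_tangent n i \<bullet> fcost_egrad_deriv n eps tau ?X ?V i
         - (?X i \<bullet> fcost_egrad n eps tau ?X i) * a i) *\<^sub>R ngon_tangent n i"
    using assms ngon_tangent_inner[of n i i] ngon_tangent_inner_regular_ngon[of n i i]
    by (simp add: rhess_fcost Let_def regular_ngon_normal_part inner_diff_right)
  also have "\<dots> = (\<Sum>l<n. (a i - a l) * hess_weight eps tau (?d l)) *\<^sub>R ngon_tangent n i"
    unfolding tangent_G' normal_G sum_distrib_right sum_subtractf[symmetric] hess_weight_def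
    by (simp add: algebra_simps)
  finally show ?thesis .
qed

section \<open>Sums over the vertices of the regular polygon\<close>

lemma sum_ngon_angle_shift:
  fixes g :: "real \<Rightarrow> 'a::cancel_comm_monoid_add"
  assumes periodic: "\<And>x. g (x + 2 * pi) = g x"
  shows "(\<Sum>l<n. g (ngon_angle n l - ngon_angle n i)) = (\<Sum>l<n. g (ngon_angle n l))"
proof (cases "n = 0")
  case False
  let ?step = "2 * pi / real n"
  have angle_Suc: "ngon_angle n (Suc l) = ngon_angle n l + ?step" for l
    using False by (simp add: ngon_angle_def field_simps)
  have [simp]: "ngon_angle n 0 = 0" by (simp add: ngon_angle_def)
  show ?thesis
  proof (induction i)
    case (Suc i)
    define G where "G x = g (x - ngon_angle n i)" for x
    have "(\<Sum>l<n. G (ngon_angle n l - ?step)) + G (- ?step) = (\<Sum>l<Suc n. G (ngon_angle n l - ?step))"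
      using False periodic[of "- ?step - ngon_angle n i"]
      by (simp add: G_def ngon_angle_def algebra_simps)
    also have "\<dots> = G (- ?step) + (\<Sum>l<n. G (ngon_angle n l))"
      by (subst sum.lessThan_Suc_shift) (simp add: angle_Suc)
    finally have "(\<Sum>l<n. G (ngon_angle n l - ?step)) = (\<Sum>l<n. G (ngon_angle n l))"
      by (metis add.commute add_left_cancel)
    then show ?case using Suc by (simp add: G_def angle_Suc algebra_simps)
  qed simp
qed simp

lemma sum_ngon_angle_odd_eq_0:
  fixes g :: "real \<Rightarrow> real"
  assumes periodic: "\<And>x. g (x + 2 * pi) = g x" and odd: "\<And>x. g (- x) = - g x"
  shows "(\<Sum>l<n. g (ngon_angle n l)) = 0"
proof -
  have "(\<Sum>l<n. g (ngon_angle n l)) = (\<Sum>l<n. g (ngon_angle n (n - Suc l)))"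
    by (rule sum.nat_diff_reindex[symmetric])
  also have "\<dots> = (\<Sum>l<n. - g (ngon_angle n l - ngon_angle n (n - 1)))"
  proof (intro sum.cong refl)
    fix l assume "l \<in> {..<n}"
    then have "ngon_angle n (n - Suc l) = - (ngon_angle n l - ngon_angle n (n - 1))"
      by (simp add: ngon_angle_def of_nat_diff field_simps)
    then show "g (ngon_angle n (n - Suc l)) = - g (ngon_angle n l - ngon_angle n (n - 1))"
      by (metis odd)
  qed
  also have "\<dots> = - (\<Sum>l<n. g (ngon_angle n l))"
    by (simp add: sum_negf sum_ngon_angle_shift periodic)
  finally show ?thesis by simp
qed

lemma sin_add_2pi_multiple: "sin (x + 2 * pi * real k) = sin x"
  using sin_2npi[of k] cos_2npi[of k] by (simp add: sin_add mult.commute mult.left_commute)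

lemma cos_add_2pi_multiple: "cos (x + 2 * pi * real k) = cos x"
  using sin_2npi[of k] cos_2npi[of k] by (simp add: cos_add mult.commute mult.left_commute)

lemma sum_ngon_sin_multiple: "(\<Sum>l<n. sin (real m * ngon_angle n l)) = 0"
proof (rule sum_ngon_angle_odd_eq_0)
  show "sin (real m * (x + 2 * pi)) = sin (real m * x)" for x
    using sin_add_2pi_multiple[of "real m * x" m] by (simp add: algebra_simps)
qed simp

lemma sum_ngon_cos_multiple:
  assumes "m \<noteq> 0" and "\<bar>m\<bar> < int n"
  shows "(\<Sum>l<n. cos (of_int m * ngon_angle n l)) = 0"
proof -
  have n: "real n > 0" using assms by simp
  define \<omega> where "\<omega> = cis (2 * pi * of_int m / real n)"
  have "\<omega> \<noteq> 1"
  proof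
    assume "\<omega> = 1"
    then obtain j :: int where "2 * pi * of_int m / real n = of_int j * 2 * pi"
      by (auto simp: \<omega>_def complex_eq_iff cos_one_2pi_int)
    then have "real_of_int m = real_of_int j * real n" using n by (simp add: field_simps)
    then have "m = j * int n" by (metis of_int_eq_iff of_int_mult of_int_of_nat_eq)
    then show False using assms by (simp add: abs_mult)
  qed
  moreover have "\<omega> ^ n = 1"
  proof -
    have "\<omega> ^ n = cis (2 * pi * of_int m)"
      unfolding \<omega>_def Complex.DeMoivre using n by simp
    also have "\<dots> = 1" by (rule cis_multiple_2pi) simp
    finally show ?thesis .
  qed
  ultimately have "(\<Sum>l<n. \<omega> ^ l) = 0"
    by (simp add: geometric_sum)
  moreover have "\<omega> ^ l = cis (of_int m * ngon_angle n l)" for l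
    by (simp add: \<omega>_def Complex.DeMoivre ngon_angle_def algebra_simps)
  ultimately have "(\<Sum>l<n. cis (of_int m * ngon_angle n l)) = 0"
    by simp
  from arg_cong[where f = Re, OF this] show ?thesis
    by simp
qed

definition cas :: "real \<Rightarrow> real" where
  "cas x = cos x + sin x"

lemma sum_ngon_cas_orthogonal:
  assumes "k < n" and "k' < n"
  shows "(\<Sum>l<n. cas (real k * ngon_angle n l) * cas (real k' * ngon_angle n l))
           = (if k = k' then real n else 0)"
proof -
  have "(\<Sum>l<n. cas (real k * ngon_angle n l) * cas (real k' * ngon_angle n l))
      = (\<Sum>l<n. cos (of_int (int k - int k') * ngon_angle n l)) + (\<Sum>l<n. sin (real (k + k') * ngon_angle n l))"
    unfolding sum.distrib[symmetric]
    by (intro sum.cong refl) (simp add: cas_def cos_diff sin_add algebra_simps)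
  also have "\<dots> = (\<Sum>l<n. cos (of_int (int k - int k') * ngon_angle n l))"
    by (simp only: sum_ngon_sin_multiple add_0_right)
  also have "\<dots> = (if k = k' then real n else 0)"
  proof (cases "k = k'")
    case False
    then show ?thesis using assms sum_ngon_cos_multiple[of "int k - int k'" n] by simp
  qed simp
  finally show ?thesis .
qed

lemma sum_ngon_circulant_cas:
  fixes w :: "real \<Rightarrow> real"
  assumes periodic: "\<And>x. w (x + 2 * pi) = w x" and even: "\<And>x. w (- x) = w x"
  shows "(\<Sum>l<n. (cas (real k * ngon_angle n i) - cas (real k * ngon_angle n l)) * w (ngon_angle n l - ngon_angle n i))
     = cas (real k * ngon_angle n i) * (\<Sum>m<n. w (ngon_angle n m) * (1 - cos (real k * ngon_angle n m)))"
proof -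
  define A where "A = real k * ngon_angle n i"
  have k_periodic: "real k * (x + 2 * pi) = real k * x + 2 * pi * real k" for x
    by (simp add: algebra_simps)
  have "(\<Sum>l<n. (cas A - cas (real k * ngon_angle n l)) * w (ngon_angle n l - ngon_angle n i))
      = (\<Sum>l<n. (cas A - cas (A + real k * (ngon_angle n l - ngon_angle n i))) * w (ngon_angle n l - ngon_angle n i))"
    by (simp add: A_def algebra_simps)
  also have "\<dots> = (\<Sum>l<n. (cas A - cas (A + real k * ngon_angle n l)) * w (ngon_angle n l))"
    by (rule sum_ngon_angle_shift)
       (simp add: cas_def periodic k_periodic add.assoc[symmetric] cos_add_2pi_multiple sin_add_2pi_multiple)
  also have "\<dots> = cas A * (\<Sum>l<n. w (ngon_angle n l) * (1 - cos (real k * ngon_angle n l)))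
                    + (sin A - cos A) * (\<Sum>l<n. w (ngon_angle n l) * sin (real k * ngon_angle n l))"
    unfolding sum_distrib_left sum.distrib[symmetric]
    by (intro sum.cong refl) (simp add: cas_def cos_add sin_add algebra_simps)
  moreover have "(\<Sum>l<n. w (ngon_angle n l) * sin (real k * ngon_angle n l)) = 0"
  proof (rule sum_ngon_angle_odd_eq_0)
    show "w (x + 2 * pi) * sin (real k * (x + 2 * pi)) = w x * sin (real k * x)" for x
      unfolding periodic using sin_add_2pi_multiple[of "real k * x" k] by (simp add: algebra_simps)
  qed (simp add: even)
  ultimately show ?thesis by (simp add: A_def)
qed

section \<open>Spectrum of the Hessian\<close>

lemma hess_weight_periodic: "hess_weight eps tau (x + 2 * pi) = hess_weight eps tau x"
  by (simp add: hess_weight_def)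

lemma hess_weight_even: "hess_weight eps tau (- x) = hess_weight eps tau x"
  by (simp add: hess_weight_def)

lemma critical_point_regular_ngon:
  assumes "eps > 0"
  shows "critical_point n (fcost n eps tau) (regular_ngon n)"
  unfolding critical_point_def
proof (intro conjI allI impI)
  show "on_torus n (regular_ngon n)"
    by (simp add: on_torus_def norm_eq_sqrt_inner regular_ngon_inner)
  fix i assume "i < n"
  let ?g = "\<lambda>d. phi' eps tau (cos d) * sin d"
  have "ngon_tangent n i \<bullet> fcost_egrad n eps tau (regular_ngon n) i
      = (\<Sum>l<n. ?g (ngon_angle n l - ngon_angle n i))"
    by (simp add: fcost_egrad_def inner_sum_right ngon_tangent_inner_regular_ngon regular_ngon_inner)
  also have "\<dots> = 0"
    using sum_ngon_angle_shift[of ?g n i] sum_ngon_angle_odd_eq_0[of ?g n] by simp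
  finally show "rgrad n (fcost n eps tau) (regular_ngon n) i = 0"
    using rgrad_fcost[OF assms \<open>i < n\<close>] by (simp add: regular_ngon_normal_part)
qed

definition hess_eigenvalue :: "real \<Rightarrow> real \<Rightarrow> nat \<Rightarrow> nat \<Rightarrow> real" where
  "hess_eigenvalue eps tau n k =
     (\<Sum>m<n. hess_weight eps tau (ngon_angle n m) * (1 - cos (real k * ngon_angle n m)))"

definition hartley_field :: "nat \<Rightarrow> nat \<Rightarrow> cmat" where
  "hartley_field n k =
     (\<lambda>l. (if l < n then cas (real k * ngon_angle n l) / sqrt (real n) else 0) *\<^sub>R ngon_tangent n l)"

lemma hess_eigenvalues_regular_ngon:
  assumes "eps > 0"
  shows "hess_eigenvalues n (fcost n eps tau) (regular_ngon n) (hess_eigenvalue eps tau n)"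
  unfolding hess_eigenvalues_def
proof (intro exI[of _ "hartley_field n"] conjI allI impI)
  fix k assume k: "k < n"
  show "tangent n (regular_ngon n) (hartley_field n k)"
    by (simp add: tangent_def hartley_field_def regular_ngon_inner_ngon_tangent)
  fix l assume l: "l < n"
  have "frob n (hartley_field n k) (hartley_field n l)
      = (\<Sum>i<n. cas (real l * ngon_angle n i) * cas (real k * ngon_angle n i)) / real n"
    by (simp add: frob_def hartley_field_def ngon_tangent_inner sum_divide_distrib)
  then show "frob n (hartley_field n k) (hartley_field n l) = (if k = l then 1 else 0)"
    using sum_ngon_cas_orthogonal[OF l k] l by auto
next
  fix k i assume "k < n" "i < n"
  let ?a = "\<lambda>l. cas (real k * ngon_angle n l) / sqrt (real n)"
  have "(\<Sum>l<n. (?a i - ?a l) * hess_weight eps tau (ngon_angle n l - ngon_angle n i))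
      = (\<Sum>l<n. (cas (real k * ngon_angle n i) - cas (real k * ngon_angle n l))
                 * hess_weight eps tau (ngon_angle n l - ngon_angle n i)) / sqrt (real n)"
    unfolding sum_divide_distrib by (intro sum.cong refl) (simp add: diff_divide_distrib[symmetric])
  also have "\<dots> = ?a i * hess_eigenvalue eps tau n k"
    using sum_ngon_circulant_cas[where w = "hess_weight eps tau" and k = k and n = n and i = i,
        OF hess_weight_periodic hess_weight_even]
    by (simp add: hess_eigenvalue_def)
  finally show "rhess n (fcost n eps tau) (regular_ngon n) (hartley_field n k) i
      = hess_eigenvalue eps tau n k *\<^sub>R hartley_field n k i"
    using rhess_fcost_regular_ngon[where a = ?a, OF assms \<open>i < n\<close>] \<open>i < n\<close>
    by (simp add: hartley_field_def)
qed

section \<open>The limit of vanishing smoothing\<close>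

lemma phi'_tendsto:
  assumes "c \<noteq> tau"
  shows "((\<lambda>eps. phi' eps tau c) \<longlongrightarrow> (if tau < c then 1 else 0)) (at_right 0)"
proof -
  have "a > 0 \<Longrightarrow> ((\<lambda>eps. exp (a / eps) / (1 + exp (a / eps))) \<longlongrightarrow> 1) (at_right 0)"
    and "a < 0 \<Longrightarrow> ((\<lambda>eps. exp (a / eps) / (1 + exp (a / eps))) \<longlongrightarrow> 0) (at_right 0)"
    for a :: real by real_asymp+
  then show ?thesis
    using assms unfolding phi'_def by (cases "tau < c") auto
qed

lemma phi''_tendsto_0:
  assumes "c \<noteq> tau"
  shows "((\<lambda>eps. phi'' eps tau c) \<longlongrightarrow> 0) (at_right 0)"
proof -
  have "a \<noteq> 0 \<Longrightarrow> ((\<lambda>eps. exp (a / eps) / (eps * (1 + exp (a / eps))\<^sup>2)) \<longlongrightarrow> 0) (at_right 0)"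
    for a :: real by (cases "a > 0") real_asymp+
  then show ?thesis
    using assms unfolding phi''_def by simp
qed

lemma hess_weight_tendsto:
  assumes "cos d \<noteq> tau"
  shows "((\<lambda>eps. hess_weight eps tau d) \<longlongrightarrow> (if tau < cos d then - cos d else 0)) (at_right 0)"
proof -
  have "((\<lambda>eps. phi'' eps tau (cos d) * (sin d)\<^sup>2 - phi' eps tau (cos d) * cos d)
      \<longlongrightarrow> 0 * (sin d)\<^sup>2 - (if tau < cos d then 1 else 0) * cos d) (at_right 0)"
    by (intro tendsto_intros phi''_tendsto_0 phi'_tendsto assms)
  then show ?thesis by (simp add: hess_weight_def split: if_splits)
qed

lemma cos_lt_1:
  assumes "0 < x" and "x < 2 * pi"
  shows "cos x < 1"
proof -
  have "cos x \<noteq> 1"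
  proof
    assume "cos x = 1"
    then obtain j :: int where "x = of_int j * 2 * pi" by (auto simp: cos_one_2pi_int)
    with assms have "0 < j" and "j < 1" by (simp_all add: zero_less_mult_iff)
    then show False by simp
  qed
  with cos_le_one[of x] show ?thesis by linarith
qed

lemma eventually_hess_eigenvalue_neg:
  assumes "0 \<le> tau" and "tau < cos (2 * pi / real n)"
    and "\<forall>m<n. cos (ngon_angle n m) \<noteq> tau" and "0 < k" and "k < n"
  shows "\<forall>\<^sub>F eps in at_right 0. hess_eigenvalue eps tau n k < 0"
proof -
  define f where "f m = (if tau < cos (ngon_angle n m) then - cos (ngon_angle n m) else 0)
                          * (1 - cos (real k * ngon_angle n m))" for m
  have "((\<lambda>eps. hess_eigenvalue eps tau n k) \<longlongrightarrow> (\<Sum>m<n. f m)) (at_right 0)"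
    unfolding hess_eigenvalue_def f_def using assms(3)
    by (intro tendsto_sum tendsto_mult tendsto_const hess_weight_tendsto) auto
  moreover have "(\<Sum>m<n. f m) < 0"
  proof -
    have "f 1 < 0"
    proof -
      have "0 < real k * ngon_angle n 1" and "real k * ngon_angle n 1 < 2 * pi"
        using assms(4,5) by (simp_all add: ngon_angle_def field_simps)
      then have "0 < 1 - cos (real k * ngon_angle n 1)"
        by (simp add: cos_lt_1)
      moreover have "tau < cos (ngon_angle n 1)"
        using assms(2) by (simp add: ngon_angle_def)
      ultimately show ?thesis
        using assms(1) by (simp add: f_def mult_neg_pos)
    qed
    moreover have "(\<Sum>m\<in>{..<n} - {1}. f m) \<le> 0"
      using assms(1) by (intro sum_nonpos) (simp add: f_def mult_nonpos_nonneg)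
    moreover have "(\<Sum>m<n. f m) = f 1 + (\<Sum>m\<in>{..<n} - {1}. f m)"
      using assms(4,5) by (intro sum.remove) auto
    ultimately show ?thesis by linarith
  qed
  ultimately show ?thesis by (rule order_tendstoD(2))
qed

theorem mainTheorem12:
  fixes n :: nat and tau :: real
  assumes "n \<ge> 5"
    and "0 \<le> tau" and "tau < cos (2 * pi / 5)"
    and "\<forall>i\<in>{1..n}. tau \<noteq> cos (2 * pi * (real i - 1) / real n)"
  shows "\<exists>eps0 > 0. \<forall>eps. 0 < eps \<and> eps \<le> eps0 \<longrightarrow>
           critical_point n (fcost n eps tau) (regular_ngon n) \<and>
           (\<exists>lam. hess_eigenvalues n (fcost n eps tau) (regular_ngon n) lam \<and>
                  lam 0 = 0 \<and> (\<forall>k\<in>{1..<n}. lam k < 0))"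
proof -
  have "cos (2 * pi / 5) \<le> cos (2 * pi / real n)"
    using assms(1) by (intro cos_monotone_0_pi_le) (auto simp: field_simps)
  moreover have "\<forall>m<n. cos (ngon_angle n m) \<noteq> tau"
  proof (intro allI impI)
    fix m assume "m < n"
    then show "cos (ngon_angle n m) \<noteq> tau"
      using assms(4)[rule_format, of "Suc m"] by (simp add: ngon_angle_def)
  qed
  ultimately have "\<forall>\<^sub>F eps in at_right 0. \<forall>k\<in>{1..<n}. hess_eigenvalue eps tau n k < 0"
    using assms(2,3) by (intro eventually_ball_finite ballI eventually_hess_eigenvalue_neg) auto
  then obtain b where "b > 0"
    and b: "\<And>eps. 0 < eps \<Longrightarrow> eps < b \<Longrightarrow> \<forall>k\<in>{1..<n}. hess_eigenvalue eps tau n k < 0"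
    unfolding eventually_at_right_field by auto
  show ?thesis
  proof (intro exI[of _ "b / 2"] conjI allI impI)
    show "b / 2 > 0" using \<open>b > 0\<close> by simp
    fix eps assume eps: "0 < eps \<and> eps \<le> b / 2"
    then show "critical_point n (fcost n eps tau) (regular_ngon n)"
      by (simp add: critical_point_regular_ngon)
    have "hess_eigenvalue eps tau n 0 = 0"
      by (simp add: hess_eigenvalue_def)
    with eps \<open>b > 0\<close> show "\<exists>lam. hess_eigenvalues n (fcost n eps tau) (regular_ngon n) lam \<and>
        lam 0 = 0 \<and> (\<forall>k\<in>{1..<n}. lam k < 0)"
      by (intro exI[of _ "hess_eigenvalue eps tau n"]) (simp add: b hess_eigenvalues_regular_ngon)
  qed
qed

end
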